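(* Let $A\subseteq\mathbb{R}$ be nonempty and $a\in A$. For each $k\in\mathbb{N}$ let $f_k:A\to\mathbb{R}$ be weakly symmetrically continuous at $a$, and suppose $(f_k)$ converges uniformly on $A$ to a function $f:A\to\mathbb{R}$. Then $f$ is weakly symmetrically continuous at $a$.
   Context: $S_a(A)$ is the set of all sequences $(h_n)$ of positive reals converging to $0$ with $a+h_n,a-h_n\in A$ for every $n$; a function $f:A\to\mathbb{R}$ is weakly symmetrically continuous at $a$ if, whenever $S_a(A)\neq\emptyset$, there exists $(h_n)\in S_a(A)$ with $\lim_{n\to\infty}\big(f(a+h_n)-f(a-h_n)\big)=0$. *)

theory Defs
  imports "HOL-Analysis.Analysis"
begin

definition sym_seqs :: "real set \<Rightarrow> real \<Rightarrow> (nat \<Rightarrow> real) set" where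
  "sym_seqs A a = {h. (\<forall>n. h n > 0) \<and> h \<longlonglongrightarrow> 0 \<and> (\<forall>n. a + h n \<in> A \<and> a - h n \<in> A)}"

definition weakly_sym_cont :: "real set \<Rightarrow> (real \<Rightarrow> real) \<Rightarrow> real \<Rightarrow> bool" where
  "weakly_sym_cont A f a \<longleftrightarrow>
     (sym_seqs A a \<noteq> {} \<longrightarrow>
        (\<exists>h\<in>sym_seqs A a. (\<lambda>n. f (a + h n) - f (a - h n)) \<longlonglongrightarrow> 0))"

end

theory Submission
  imports Defs
begin

(* The sequential definition is replaced by an equivalent epsilon criterion:
   f is weakly symmetrically continuous at a iff, whenever symmetric sequences
   exist at all, every e > 0 admits a "symmetric step" t with 0 < t < e,
   a +- t in A and |f (a + t) - f (a - t)| < e.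

   For the theorem, given e > 0 pick an index N with |fs N - f| < e/3 on A and a
   symmetric step t for fs N with tolerance e/3; the triangle inequality makes t
   a symmetric step for f with tolerance e. *)

definition sym_step :: "real set \<Rightarrow> (real \<Rightarrow> real) \<Rightarrow> real \<Rightarrow> real \<Rightarrow> real \<Rightarrow> bool" where
  "sym_step A f a e t \<longleftrightarrow>
     0 < t \<and> t < e \<and> a + t \<in> A \<and> a - t \<in> A \<and> \<bar>f (a + t) - f (a - t)\<bar> < e"

lemma weakly_sym_cont_imp_sym_step:
  assumes "weakly_sym_cont A f a" and "sym_seqs A a \<noteq> {}" and "e > 0"
  shows "\<exists>t. sym_step A f a e t"
proof -
  from assms(1,2) obtain h where h: "h \<in> sym_seqs A a"
    and diff_lim: "(\<lambda>n. f (a + h n) - f (a - h n)) \<longlonglongrightarrow> 0"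
    unfolding weakly_sym_cont_def by blast
  from h have pos: "\<And>n. h n > 0" and h_lim: "h \<longlonglongrightarrow> 0"
    and inA: "\<And>n. a + h n \<in> A \<and> a - h n \<in> A"
    unfolding sym_seqs_def by auto
  have "\<forall>\<^sub>F n in sequentially. dist (h n) 0 < e"
    using h_lim \<open>e > 0\<close> by (rule tendstoD)
  moreover have "\<forall>\<^sub>F n in sequentially. dist (f (a + h n) - f (a - h n)) 0 < e"
    using diff_lim \<open>e > 0\<close> by (rule tendstoD)
  ultimately obtain n where "dist (h n) 0 < e" "dist (f (a + h n) - f (a - h n)) 0 < e"
    by (metis (mono_tags, lifting) eventually_conj eventually_sequentially order_refl)
  with pos[of n] inA[of n] have "sym_step A f a e (h n)"
    by (simp add: sym_step_def dist_real_def)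
  then show ?thesis ..
qed

lemma sym_step_imp_weakly_sym_cont:
  assumes "\<And>e. e > 0 \<Longrightarrow> \<exists>t. sym_step A f a e t"
  shows "weakly_sym_cont A f a"
proof -
  define \<epsilon> where "\<epsilon> k = inverse (real (Suc k))" for k
  have "\<forall>k. \<exists>t. sym_step A f a (\<epsilon> k) t"
    using assms by (simp add: \<epsilon>_def)
  then obtain g where g: "\<And>k. sym_step A f a (\<epsilon> k) (g k)"
    by metis
  have \<epsilon>_lim: "\<epsilon> \<longlonglongrightarrow> 0"
    unfolding \<epsilon>_def using LIMSEQ_inverse_real_of_nat by simp
  have "g \<longlonglongrightarrow> 0"
  proof (rule Lim_null_comparison[OF always_eventually \<epsilon>_lim], intro allI)
    show "norm (g k) \<le> \<epsilon> k" for k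
      using g[of k] by (simp add: sym_step_def)
  qed
  then have "g \<in> sym_seqs A a"
    using g by (auto simp: sym_seqs_def sym_step_def)
  moreover have "(\<lambda>k. f (a + g k) - f (a - g k)) \<longlonglongrightarrow> 0"
  proof (rule Lim_null_comparison[OF always_eventually \<epsilon>_lim], intro allI)
    show "norm (f (a + g k) - f (a - g k)) \<le> \<epsilon> k" for k
      using g[of k] by (simp add: sym_step_def)
  qed
  ultimately show ?thesis
    unfolding weakly_sym_cont_def by blast
qed

lemma sym_step_uniform_approx:
  assumes step: "sym_step A g a (e / 3) t"
    and close: "\<And>x. x \<in> A \<Longrightarrow> \<bar>g x - f x\<bar> < e / 3"
  shows "sym_step A f a e t"
proof -
  from step have inA: "a + t \<in> A" "a - t \<in> A"
    by (simp_all add: sym_step_def)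
  have "\<bar>f (a + t) - f (a - t)\<bar>
      \<le> \<bar>g (a + t) - g (a - t)\<bar> + \<bar>g (a + t) - f (a + t)\<bar> + \<bar>g (a - t) - f (a - t)\<bar>"
    by linarith
  also have "\<dots> < e / 3 + e / 3 + e / 3"
    using step close[OF inA(1)] close[OF inA(2)] by (simp add: sym_step_def)
  finally show ?thesis
    using step by (simp add: sym_step_def)
qed

theorem theorem4p2:
  fixes A :: "real set" and a :: real
    and fs :: "nat \<Rightarrow> real \<Rightarrow> real" and f :: "real \<Rightarrow> real"
  assumes "A \<noteq> {}" and "a \<in> A"
    and "\<And>k. weakly_sym_cont A (fs k) a"
    and "uniform_limit A fs f sequentially"
  shows "weakly_sym_cont A f a"
proof (cases "sym_seqs A a = {}")
  case True
  then show ?thesis by (simp add: weakly_sym_cont_def)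
next
  case False
  show ?thesis
  proof (rule sym_step_imp_weakly_sym_cont)
    fix e :: real
    assume "e > 0"
    then have "e / 3 > 0" by simp
    then have "\<forall>\<^sub>F n in sequentially. \<forall>x\<in>A. dist (fs n x) (f x) < e / 3"
      using assms(4) uniform_limit_iff by blast
    then obtain N where close: "\<And>x. x \<in> A \<Longrightarrow> \<bar>fs N x - f x\<bar> < e / 3"
      by (auto simp: eventually_sequentially dist_real_def)
    obtain t where "sym_step A (fs N) a (e / 3) t"
      using weakly_sym_cont_imp_sym_step[OF assms(3) False \<open>e / 3 > 0\<close>] by blast
    then show "\<exists>t. sym_step A f a e t"
      using sym_step_uniform_approx close by blast
  qed
qed

end
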